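(* Let $n,m,p\ge1$, let $A:\mathbb{R}^p\to\mathbb{R}^{n\times n}$, $B:\mathbb{R}^p\to\mathbb{R}^{n\times m}$ be known affine functions, and let $Q\in\mathbb{R}^{n\times n}$, $R\in\mathbb{R}^{m\times m}$ be symmetric positive definite. Consider the system $$x_{k+1}=A(\theta_k)x_k+B(\theta_k)u_k+w_k,\qquad k\in\mathbb{N},$$ with state $x_k\in\mathbb{R}^n$, input $u_k\in\mathbb{R}^m$, disturbance $w_k\in\mathbb{R}^n$ and time-varying parameter $\theta_k\in\mathbb{R}^p$. Assume: (i) there is $\bar W\ge0$ with $\|w_k\|\le\bar W$ for all $k$; (ii) there is a known compact convex set $\Theta\subset\mathbb{R}^p$ with $\theta_k\in\Theta$ for all $k$, such that $(A(\theta),B(\theta))$ is stabilizable for every $\theta\in\Theta$. Let $\mu>0$ and let $\{\hat\theta_k\}\subset\Theta$ be any sequence of parameter estimates, and apply the certainty-equivalent LQR input $u_k=K_{\mathrm{LQR}}(\hat\theta_k)x_k$. Define the nominal prediction $\hat x_{1|k}=A(\hat\theta_k)x_k+B(\hat\theta_k)u_k$ and prediction error $e_{1|k}=x_{k+1}-\hat x_{1|k}-w_k$. Suppose that the estimates satisfy $$\|\hat\theta_{k+1}-\hat\theta_k\|\le\sqrt{\mu}\,\|e_{1|k}+w_k\|\quad\text{for all }k\in\mathbb{N},$$ and that the state is uniformly bounded: $\|x_k\|\le X$ for all $k\in\mathbb{N}$, for some $X>0$. Then there exist constants $\alpha,\beta,\gamma>0$ such that, with $V(x,\theta)=x^\top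 P(\theta)x$, $$V(x_{k+1},\hat\theta_{k+1})-V(x_k,\hat\theta_k)\le-\alpha\|x_k\|^2+\beta\|e_{1|k}\|^2+\gamma\|w_k\|^2\quad\text{for all }k\in\mathbb{N}.$$
   Context: For $\theta\in\Theta$, $P(\theta)$ denotes the unique positive definite solution of the discrete-time algebraic Riccati equation $P = A(\theta)^\top P A(\theta) - A(\theta)^\top P B(\theta)(R+B(\theta)^\top P B(\theta))^{-1}B(\theta)^\top P A(\theta) + Q$, and $K_{\mathrm{LQR}}(\theta) = -(R+B(\theta)^\top P(\theta)B(\theta))^{-1}B(\theta)^\top P(\theta)A(\theta)$ is the corresponding LQR gain. $\|\cdot\|$ is the Euclidean norm on vectors and the spectral norm on matrices; $\mathbb{N}=\{0,1,2,\dots\}$. *)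

theory Defs
  imports "HOL-Analysis.Analysis"
begin

primrec mat_pow :: "real^'n^'n \<Rightarrow> nat \<Rightarrow> real^'n^'n" where
  "mat_pow M 0 = mat 1"
| "mat_pow M (Suc k) = M ** mat_pow M k"

text \<open>Schur stability (all eigenvalues strictly inside the unit disc), expressed through
  the standard characterisation that the powers of the matrix converge to zero.\<close>
definition schur_stable :: "real^'n^'n \<Rightarrow> bool" where
  "schur_stable M \<longleftrightarrow> (\<lambda>k. mat_pow M k) \<longlonglongrightarrow> 0"

definition stabilizable :: "real^'n^'n \<Rightarrow> real^'m^'n \<Rightarrow> bool" where
  "stabilizable A B \<longleftrightarrow> (\<exists>K :: real^'n^'m. schur_stable (A + B ** K))"

definition sym_posdef :: "real^'n^'n \<Rightarrow> bool" where
  "sym_posdef M \<longleftrightarrow> transpose M = M \<and> (\<forall>x. x \<noteq> 0 \<longrightarrow> x \<bullet> (M *v x) > 0)"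

definition dare :: "real^'n^'n \<Rightarrow> real^'m^'n \<Rightarrow> real^'n^'n \<Rightarrow> real^'m^'m \<Rightarrow> real^'n^'n \<Rightarrow> bool" where
  "dare A B Q R P \<longleftrightarrow>
     P = transpose A ** P ** A
         - transpose A ** P ** B ** matrix_inv (R + transpose B ** P ** B) ** transpose B ** P ** A
         + Q"

definition dare_P :: "real^'n^'n \<Rightarrow> real^'m^'n \<Rightarrow> real^'n^'n \<Rightarrow> real^'m^'m \<Rightarrow> real^'n^'n" where
  "dare_P A B Q R = (THE P. sym_posdef P \<and> dare A B Q R P)"

definition K_LQR :: "real^'n^'n \<Rightarrow> real^'m^'n \<Rightarrow> real^'n^'n \<Rightarrow> real^'m^'m \<Rightarrow> real^'n^'m" where
  "K_LQR A B Q R = (let P = dare_P A B Q R in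
      - (matrix_inv (R + transpose B ** P ** B) ** transpose B ** P ** A))"

definition affine_map :: "('a::real_vector \<Rightarrow> 'b::real_vector) \<Rightarrow> bool" where
  "affine_map f \<longleftrightarrow> (\<exists>c L. linear L \<and> (\<forall>x. f x = c + L x))"

end

(*
  V(x, theta) = x' P(theta) x is the LQR value function. P(theta) is the limit of value
  iteration, which stays bounded because some feedback stabilizes (A(theta), B(theta)), and it is
  the only positive definite solution of the DARE because it lies below every quadratic
  supersolution of the Bellman inequality. Along the certainty-equivalent closed loop,
  V(., theta_k) decreases by a fixed multiple of |x_k|^2 up to a term of order |e_k + w_k|^2.
  Changing the parameter costs little: if the estimate moves by less than some delta, then
  P(theta_{k+1}) <= (1 + s) P(theta_k), by a perturbation argument on the Bellman inequality that
  is uniform on the compact set Theta, and s is chosen so small that s P(theta_k) is absorbed by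
  the decrease; if it moves by more, the update law forces |e_k + w_k| >= delta / sqrt mu, while
  the value at the bounded state x_{k+1} is bounded, hence of order |e_k + w_k|^2.
*)

theory Submission
  imports Defs
begin

section \<open>Quadratic forms\<close>

definition quad_form :: "real^'n^'n \<Rightarrow> real^'n \<Rightarrow> real" where
  "quad_form M x = x \<bullet> (M *v x)"

definition sym_psd :: "real^'n^'n \<Rightarrow> bool" where
  "sym_psd M \<longleftrightarrow> transpose M = M \<and> (\<forall>x. 0 \<le> quad_form M x)"

lemma matrix_transpose_add: "transpose (M + N) = transpose M + (transpose N :: 'a::semiring_1^'n^'m)"
  by (simp add: transpose_def vec_eq_iff)

lemma matrix_transpose_diff: "transpose (M - N) = transpose M - (transpose N :: 'a::ring_1^'n^'m)"
  by (simp add: transpose_def vec_eq_iff)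

lemma matrix_transpose_zero [simp]: "transpose (0 :: 'a::semiring_1^'n^'m) = 0"
  by (simp add: transpose_def vec_eq_iff)

lemma matrix_vector_mult_uminus: "(- M) *v x = - (M *v (x :: 'a::ring_1^'n))"
  by (simp add: vec_eq_iff matrix_vector_mult_def sum_negf)

lemma norm_matrix_vector_mult_le:
  fixes M :: "real^'n^'m"
  shows "norm (M *v x) \<le> norm M * norm x"
proof -
  have "norm (M *v x) = L2_set (\<lambda>i. \<bar>M $ i \<bullet> x\<bar>) UNIV"
    by (simp add: norm_vec_def matrix_vector_mul_component)
  also have "\<dots> \<le> L2_set (\<lambda>i. norm (M $ i) * norm x) UNIV"
    by (intro L2_set_mono) (auto simp: Cauchy_Schwarz_ineq2)
  also have "\<dots> = L2_set (\<lambda>i. norm (M $ i)) UNIV * norm x"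
    by (rule L2_set_left_distrib[symmetric]) simp
  also have "\<dots> = norm M * norm x"
    by (metis norm_vec_def)
  finally show ?thesis .
qed

lemma inner_matrix_vector_mult_transpose:
  fixes M :: "real^'n^'m"
  shows "(M *v a) \<bullet> b = a \<bullet> (transpose M *v b)"
  by (metis dot_lmul_matrix inner_commute transpose_matrix_vector)

lemma inner_matrix_vector_mult_sym:
  fixes M :: "real^'n^'n"
  shows "transpose M = M \<Longrightarrow> (M *v a) \<bullet> b = a \<bullet> (M *v b)"
  by (metis inner_matrix_vector_mult_transpose)

lemma quad_form_add:
  fixes M :: "real^'n^'n"
  assumes "transpose M = M"
  shows "quad_form M (a + b) = quad_form M a + 2 * (a \<bullet> (M *v b)) + quad_form M b"
  using inner_matrix_vector_mult_sym[OF assms, of b a]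
  by (simp add: quad_form_def algebra_simps inner_add_left inner_add_right inner_commute)

lemma quad_form_scaleR: "quad_form M (c *\<^sub>R x) = c\<^sup>2 * quad_form M x"
  by (simp add: quad_form_def matrix_vector_mult_scaleR power2_eq_square)

lemma quad_form_matrix_add: "quad_form (M + N) x = quad_form M x + quad_form N x"
  by (simp add: quad_form_def matrix_vector_mult_add_rdistrib inner_add_right)

lemma quad_form_matrix_diff: "quad_form (M - N) x = quad_form M x - quad_form N x"
  by (simp add: quad_form_def matrix_vector_mult_diff_rdistrib inner_diff_right)

lemma quad_form_matrix_scaleR: "quad_form (c *\<^sub>R M) x = c * quad_form M x"
  by (simp add: quad_form_def scaleR_matrix_vector_assoc[symmetric])

lemma quad_form_zero [simp]: "quad_form 0 x = 0" "quad_form M 0 = 0"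
  by (simp_all add: quad_form_def)

lemma quad_form_congruence:
  fixes C :: "real^'n^'m"
  shows "quad_form (transpose C ** M ** C) x = quad_form M (C *v x)"
  by (simp add: quad_form_def matrix_vector_mul_assoc[symmetric]
      inner_matrix_vector_mult_transpose[symmetric] inner_commute del: transpose_matrix_vector)

lemma abs_quad_form_le: "\<bar>quad_form M x\<bar> \<le> norm M * (norm x)\<^sup>2"
proof -
  have "\<bar>quad_form M x\<bar> \<le> norm x * norm (M *v x)"
    unfolding quad_form_def by (rule Cauchy_Schwarz_ineq2)
  also have "\<dots> \<le> norm x * (norm M * norm x)"
    by (intro mult_left_mono norm_matrix_vector_mult_le) auto
  finally show ?thesis
    by (simp add: power2_eq_square algebra_simps)
qed

lemma quad_form_le_norm: "quad_form M x \<le> norm M * (norm x)\<^sup>2"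
  using abs_quad_form_le abs_le_D1 by blast

lemma tendsto_quad_form [tendsto_intros]:
  assumes "(f \<longlongrightarrow> M) F" and "(g \<longlongrightarrow> y) F"
  shows "((\<lambda>k. quad_form (f k) (g k)) \<longlongrightarrow> quad_form M y) F"
proof -
  have "((\<lambda>k. f k *v g k) \<longlongrightarrow> M *v y) F"
    unfolding matrix_vector_mult_def by (intro tendsto_intros assms)
  then show ?thesis
    unfolding quad_form_def by (intro tendsto_intros assms)
qed

lemma quad_form_polarization:
  assumes "transpose M = M"
  shows "M $ i $ j = (quad_form M (axis i 1 + axis j 1) - quad_form M (axis i 1) - quad_form M (axis j 1)) / 2"
proof -
  have "axis i 1 \<bullet> (M *v axis j 1) = M $ i $ j"
    by (simp add: inner_axis' matrix_vector_mul_component cart_eq_inner_axis[symmetric])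
  then show ?thesis
    using assms by (simp add: quad_form_add)
qed

lemma sym_matrix_eqI:
  assumes "transpose M = M" "transpose N = N" "\<And>x. quad_form M x = quad_form N x"
  shows "M = N"
proof -
  have "M $ i $ j = N $ i $ j" for i j
    unfolding quad_form_polarization[OF assms(1), of i j] quad_form_polarization[OF assms(2), of i j]
      assms(3) ..
  then show ?thesis
    by (simp add: vec_eq_iff)
qed

lemma quad_form_young:
  assumes "sym_psd P" and "\<eta> > 0"
  shows "quad_form P (a + b) \<le> (1 + \<eta>) * quad_form P a + (1 + 1 / \<eta>) * quad_form P b"
proof -
  have sym: "transpose P = P"
    using assms(1) by (simp add: sym_psd_def)
  have "0 \<le> quad_form P (\<eta> *\<^sub>R a + (- b))"
    using assms(1) by (simp add: sym_psd_def)
  also have "\<dots> = \<eta>\<^sup>2 * quad_form P a - 2 * \<eta> * (a \<bullet> (P *v b)) + quad_form P b"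
    unfolding quad_form_add[OF sym] quad_form_scaleR
    by (simp add: quad_form_def vec.neg)
  finally have "2 * (a \<bullet> (P *v b)) \<le> \<eta> * quad_form P a + quad_form P b / \<eta>"
    using assms(2) by (simp add: field_simps power2_eq_square)
  then show ?thesis
    unfolding quad_form_add[OF sym] by (simp add: algebra_simps)
qed

lemma norm_add_squared_le:
  fixes a b :: "'a::real_normed_vector"
  shows "(norm (a + b))\<^sup>2 \<le> 2 * (norm a)\<^sup>2 + 2 * (norm b)\<^sup>2"
proof -
  have "(norm (a + b))\<^sup>2 \<le> (norm a + norm b)\<^sup>2"
    by (simp add: norm_triangle_ineq power_mono)
  also have "\<dots> \<le> 2 * (norm a)\<^sup>2 + 2 * (norm b)\<^sup>2"
    using zero_le_power2[of "norm a - norm b"] unfolding power2_diff power2_sum by linarith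
  finally show ?thesis .
qed

lemma norm_matrix_vector_mult_squared_le:
  fixes M :: "real^'n^'m"
  assumes "norm M \<le> \<delta>"
  shows "(norm (M *v x))\<^sup>2 \<le> \<delta>\<^sup>2 * (norm x)\<^sup>2"
proof -
  have "norm (M *v x) \<le> \<delta> * norm x"
    using norm_matrix_vector_mult_le[of M x] assms by (meson mult_right_mono norm_ge_zero order_trans)
  then show ?thesis
    by (metis norm_ge_zero power_mono power_mult_distrib)
qed

lemma sym_posdef_imp_sym_psd: "sym_posdef M \<Longrightarrow> sym_psd M"
  unfolding sym_posdef_def sym_psd_def quad_form_def
  by (metis inner_zero_left less_eq_real_def order_refl)

lemma sym_posdef_quad_form_pos: "sym_posdef M \<Longrightarrow> x \<noteq> 0 \<Longrightarrow> 0 < quad_form M x"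
  by (simp add: sym_posdef_def quad_form_def)

lemma sym_posdef_lower_bound:
  fixes Q :: "real^'n^'n"
  assumes "sym_posdef Q"
  obtains q where "q > 0" "\<And>x. q * (norm x)\<^sup>2 \<le> quad_form Q x"
proof -
  have "continuous_on (sphere 0 1) (quad_form Q)"
    unfolding quad_form_def by (intro continuous_intros)
  moreover have "sphere (0::real^'n) 1 \<noteq> {}"
    by (metis norm_axis_1 mem_sphere_0 empty_iff)
  ultimately obtain y where y: "y \<in> sphere 0 1" "\<And>z. z \<in> sphere 0 1 \<Longrightarrow> quad_form Q y \<le> quad_form Q z"
    using continuous_attains_inf[OF compact_sphere] by blast
  have "quad_form Q y * (norm x)\<^sup>2 \<le> quad_form Q x" for x
  proof (cases "x = 0")
    case False
    have "quad_form Q x = (norm x)\<^sup>2 * quad_form Q (x /\<^sub>R norm x)"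
      using False by (metis quad_form_scaleR divideR_right norm_eq_zero)
    moreover have "quad_form Q y \<le> quad_form Q (x /\<^sub>R norm x)"
      using False by (intro y(2)) simp
    ultimately show ?thesis
      by (metis mult.commute mult_left_mono zero_le_power2)
  qed simp
  moreover have "quad_form Q y > 0"
    using y(1) by (intro sym_posdef_quad_form_pos[OF assms]) auto
  ultimately show ?thesis
    using that by blast
qed

lemma invertible_if_quad_form_pos:
  fixes S :: "real^'n^'n"
  assumes "\<And>v. v \<noteq> 0 \<Longrightarrow> quad_form S v > 0"
  shows "invertible S"
proof -
  have "\<forall>x. S *v x = 0 \<longrightarrow> x = 0"
    using assms unfolding quad_form_def by (metis inner_zero_right less_irrefl)
  then show ?thesis
    using matrix_left_invertible_ker invertible_left_inverse by blast
qed

lemma matrix_mul_matrix_inv: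
  fixes S :: "real^'n^'n"
  assumes "invertible S"
  shows "S ** matrix_inv S = mat 1" and "matrix_inv S ** S = mat 1"
proof -
  have "S ** matrix_inv S = mat 1 \<and> matrix_inv S ** S = mat 1"
    unfolding matrix_inv_def by (rule someI_ex) (use assms invertible_def in blast)
  then show "S ** matrix_inv S = mat 1" and "matrix_inv S ** S = mat 1"
    by auto
qed

lemma transpose_matrix_inv_sym:
  fixes S :: "real^'n^'n"
  assumes "invertible S" "transpose S = S"
  shows "transpose (matrix_inv S) = matrix_inv S"
proof -
  have left_inv: "transpose (matrix_inv S) ** S = mat 1"
    by (metis assms matrix_mul_matrix_inv(1) matrix_transpose_mul transpose_mat)
  have "transpose (matrix_inv S) = transpose (matrix_inv S) ** (S ** matrix_inv S)"
    by (simp add: matrix_mul_matrix_inv[OF assms(1)])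
  also have "\<dots> = matrix_inv S"
    by (metis left_inv matrix_mul_assoc matrix_mul_lid)
  finally show ?thesis .
qed

section \<open>The Riccati operator\<close>

definition riccati :: "real^'n^'n \<Rightarrow> real^'m^'n \<Rightarrow> real^'n^'n \<Rightarrow> real^'m^'m \<Rightarrow> real^'n^'n \<Rightarrow> real^'n^'n" where
  "riccati A B Q R X = transpose A ** X ** A
     - transpose A ** X ** B ** matrix_inv (R + transpose B ** X ** B) ** transpose B ** X ** A
     + Q"

definition riccati_gain :: "real^'n^'n \<Rightarrow> real^'m^'n \<Rightarrow> real^'m^'m \<Rightarrow> real^'n^'n \<Rightarrow> real^'n^'m" where
  "riccati_gain A B R X = - (matrix_inv (R + transpose B ** X ** B) ** transpose B ** X ** A)"

definition bellman :: "real^'n^'n \<Rightarrow> real^'m^'n \<Rightarrow> real^'n^'n \<Rightarrow> real^'m^'m \<Rightarrow> real^'n^'n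
    \<Rightarrow> real^'n \<Rightarrow> real^'m \<Rightarrow> real" where
  "bellman A B Q R X x v = quad_form Q x + quad_form R v + quad_form X (A *v x + B *v v)"

lemma dare_iff_riccati_fixpoint: "dare A B Q R P \<longleftrightarrow> P = riccati A B Q R P"
  unfolding dare_def riccati_def ..

lemma K_LQR_eq_riccati_gain: "K_LQR A B Q R = riccati_gain A B R (dare_P A B Q R)"
  unfolding K_LQR_def riccati_gain_def Let_def ..

lemma bellman_completion_of_squares:
  fixes A :: "real^'n^'n" and B :: "real^'m^'n"
  assumes X: "transpose X = X" and R: "transpose R = R"
    and S: "invertible (R + transpose B ** X ** B)"
  shows "bellman A B Q R X x v = quad_form (riccati A B Q R X) x
    + quad_form (R + transpose B ** X ** B) (v - riccati_gain A B R X *v x)"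
proof -
  define S where "S = R + transpose B ** X ** B"
  define h where "h = transpose B *v (X *v (A *v x))"
  define z where "z = matrix_inv S *v h"
  have S_sym: "transpose S = S"
    unfolding S_def using X R by (simp add: matrix_transpose_add matrix_transpose_mul matrix_mul_assoc)
  have Sz: "S *v z = h"
    unfolding z_def using S by (simp add: S_def matrix_vector_mul_assoc matrix_mul_matrix_inv)
  have gain: "riccati_gain A B R X *v x = - z"
    unfolding riccati_gain_def z_def h_def S_def
    by (simp add: matrix_vector_mult_uminus matrix_vector_mul_assoc matrix_mul_assoc)
  have cross: "(A *v x) \<bullet> (X *v (B *v v)) = h \<bullet> v" for v
    unfolding h_def
    by (metis X inner_commute inner_matrix_vector_mult_sym inner_matrix_vector_mult_transpose)
  have "quad_form (transpose A ** X ** B ** matrix_inv S ** transpose B ** X ** A) x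
      = (A *v x) \<bullet> (X *v (B *v z))"
    unfolding quad_form_def z_def h_def
    by (simp add: matrix_vector_mul_assoc[symmetric] inner_matrix_vector_mult_transpose)
  then have riccati: "quad_form (riccati A B Q R X) x = quad_form X (A *v x) - h \<bullet> z + quad_form Q x"
    unfolding riccati_def S_def[symmetric]
    by (simp add: quad_form_matrix_add quad_form_matrix_diff quad_form_congruence cross)
  have "quad_form S (v - - z) = quad_form S v + 2 * (v \<bullet> h) + h \<bullet> z"
    using quad_form_add[OF S_sym, of v z] Sz by (simp add: quad_form_def inner_commute)
  moreover have "quad_form S v = quad_form R v + quad_form X (B *v v)"
    by (simp add: S_def quad_form_matrix_add quad_form_congruence)
  moreover have "quad_form X (A *v x + B *v v) = quad_form X (A *v x) + 2 * (h \<bullet> v) + quad_form X (B *v v)"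
    using quad_form_add[OF X] cross by simp
  ultimately show ?thesis
    unfolding bellman_def gain S_def[symmetric] riccati by (simp add: inner_commute)
qed

lemma riccati_symmetric:
  fixes A :: "real^'n^'n" and B :: "real^'m^'n"
  assumes X: "transpose X = X" and R: "transpose R = R" and Q: "transpose Q = Q"
    and S: "invertible (R + transpose B ** X ** B)"
  shows "transpose (riccati A B Q R X) = riccati A B Q R X"
proof -
  have "transpose (R + transpose B ** X ** B) = R + transpose B ** X ** B"
    using X R by (simp add: matrix_transpose_add matrix_transpose_mul matrix_mul_assoc)
  then have "transpose (matrix_inv (R + transpose B ** X ** B)) = matrix_inv (R + transpose B ** X ** B)"
    by (rule transpose_matrix_inv_sym[OF S])
  then show ?thesis
    unfolding riccati_def using X Q
    by (simp add: matrix_transpose_mul matrix_mul_assoc matrix_transpose_add matrix_transpose_diff)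
qed

lemma quad_form_input_weight:
  assumes "sym_posdef R" "sym_psd X"
  shows "quad_form (R + transpose B ** X ** B) v = quad_form R v + quad_form X (B *v v)"
    and "0 \<le> quad_form (R + transpose B ** X ** B) v"
    and "invertible (R + transpose B ** X ** B)"
proof -
  show eq: "quad_form (R + transpose B ** X ** B) v = quad_form R v + quad_form X (B *v v)" for v
    by (simp add: quad_form_matrix_add quad_form_congruence)
  show "0 \<le> quad_form (R + transpose B ** X ** B) v"
    using sym_posdef_imp_sym_psd[OF assms(1)] assms(2) by (simp add: eq sym_psd_def)
  show "invertible (R + transpose B ** X ** B)"
    using assms by (intro invertible_if_quad_form_pos)
      (simp add: eq sym_psd_def add_pos_nonneg sym_posdef_quad_form_pos)
qed

lemma riccati_le_bellman:
  assumes "sym_posdef R" "sym_psd X"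
  shows "quad_form (riccati A B Q R X) x \<le> bellman A B Q R X x v"
  using bellman_completion_of_squares[of X R B A Q x v] quad_form_input_weight[OF assms] assms
  by (simp add: sym_posdef_def sym_psd_def)

lemma riccati_eq_bellman_gain:
  assumes "sym_posdef R" "sym_psd X"
  shows "quad_form (riccati A B Q R X) x = bellman A B Q R X x (riccati_gain A B R X *v x)"
  using bellman_completion_of_squares[of X R B A Q x] quad_form_input_weight[OF assms] assms
  by (simp add: sym_posdef_def sym_psd_def)

lemma quad_form_le_riccati:
  assumes "sym_posdef R" "sym_psd X"
  shows "quad_form Q x \<le> quad_form (riccati A B Q R X) x"
  using riccati_eq_bellman_gain[OF assms] sym_posdef_imp_sym_psd[OF assms(1)] assms(2)
  by (simp add: bellman_def sym_psd_def add_nonneg_nonneg)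

lemma sym_psd_riccati:
  assumes "sym_posdef R" "sym_psd Q" "sym_psd X"
  shows "sym_psd (riccati A B Q R X)"
  using assms quad_form_le_riccati[OF assms(1,3)] riccati_symmetric quad_form_input_weight(3)
  unfolding sym_psd_def sym_posdef_def by (meson order_trans)

lemma riccati_mono:
  assumes "sym_posdef R" "sym_psd X" "sym_psd Y" "\<And>x. quad_form X x \<le> quad_form Y x"
  shows "quad_form (riccati A B Q R X) x \<le> quad_form (riccati A B Q R Y) x"
proof -
  have "quad_form (riccati A B Q R X) x \<le> bellman A B Q R X x (riccati_gain A B R Y *v x)"
    by (rule riccati_le_bellman[OF assms(1,2)])
  also have "\<dots> \<le> bellman A B Q R Y x (riccati_gain A B R Y *v x)"
    unfolding bellman_def using assms(4) by simp
  also have "\<dots> = quad_form (riccati A B Q R Y) x"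
    by (rule riccati_eq_bellman_gain[OF assms(1,3), symmetric])
  finally show ?thesis .
qed

section \<open>Uniqueness of the positive definite solution\<close>

lemma lyapunov_iterates_tendsto_zero:
  fixes f :: "'a::real_normed_vector \<Rightarrow> 'a"
  assumes q: "q > 0" and V_nonneg: "\<And>y. 0 \<le> V y"
    and V_decrease: "\<And>y. V (f y) + q * (norm y)\<^sup>2 \<le> V y"
  shows "(\<lambda>k. (f ^^ k) x) \<longlonglongrightarrow> 0"
proof -
  have partial_sums: "q * (\<Sum>k<N. (norm ((f ^^ k) x))\<^sup>2) + V ((f ^^ N) x) \<le> V x" for N
  proof (induction N)
    case (Suc N)
    then show ?case
      using V_decrease[of "(f ^^ N) x"] by (simp add: distrib_left)
  qed simp
  have "(\<Sum>k<N. (norm ((f ^^ k) x))\<^sup>2) \<le> V x / q" for N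
    using partial_sums[of N] V_nonneg[of "(f ^^ N) x"] q by (simp add: field_simps)
  then have "summable (\<lambda>k. (norm ((f ^^ k) x))\<^sup>2)"
    by (intro summableI_nonneg_bounded) auto
  then have "(\<lambda>k. sqrt ((norm ((f ^^ k) x))\<^sup>2)) \<longlonglongrightarrow> sqrt 0"
    by (intro tendsto_real_sqrt summable_LIMSEQ_zero)
  then have "(\<lambda>k. norm ((f ^^ k) x)) \<longlonglongrightarrow> 0"
    by simp
  then show ?thesis
    by (rule tendsto_norm_zero_cancel)
qed

(* Along the closed loop of K the difference X - P does not increase, and both forms vanish in
   the limit because X is a Lyapunov function for that loop. *)
lemma dare_le_bellman_supersolution:
  fixes A :: "real^'n^'n" and B :: "real^'m^'n" and K :: "real^'n^'m"
  assumes R: "sym_posdef R" and q: "q > 0" "\<And>x. q * (norm x)\<^sup>2 \<le> quad_form Q x"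
    and P: "sym_psd P" "P = riccati A B Q R P"
    and X: "\<And>x. 0 \<le> quad_form X x"
    and super: "\<And>x. bellman A B Q R X x (K *v x) \<le> quad_form X x"
  shows "quad_form P x \<le> quad_form X x"
proof -
  define L where "L y = A *v y + B *v (K *v y)" for y
  define D where "D y = quad_form X y - quad_form P y" for y
  have D_step: "D (L y) \<le> D y" for y
    using riccati_le_bellman[OF R P(1), of A B Q y "K *v y"] super[of y] P(2)[symmetric]
    unfolding D_def L_def bellman_def by simp
  have D_iterate: "D ((L ^^ k) x) \<le> D x" for k
  proof (induction k)
    case (Suc k)
    then show ?case
      using D_step[of "(L ^^ k) x"] by simp
  qed simp
  have "quad_form X (L y) + q * (norm y)\<^sup>2 \<le> quad_form X y" for y
  proof -
    have "0 \<le> quad_form R (K *v y)"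
      using sym_posdef_imp_sym_psd[OF R] by (simp add: sym_psd_def)
    then show ?thesis
      using super[of y] q(2)[of y] by (simp add: bellman_def L_def)
  qed
  then have "(\<lambda>k. (L ^^ k) x) \<longlonglongrightarrow> 0"
    by (rule lyapunov_iterates_tendsto_zero[OF q(1) X])
  then have "(\<lambda>k. D ((L ^^ k) x)) \<longlonglongrightarrow> D 0"
    unfolding D_def by (intro tendsto_intros)
  then have "D 0 \<le> D x"
    using D_iterate by (intro LIMSEQ_le_const2) auto
  then show ?thesis
    by (simp add: D_def)
qed

lemma dare_closed_loop:
  assumes "sym_posdef R" "sym_psd P" "P = riccati A B Q R P"
  shows "bellman A B Q R P x (riccati_gain A B R P *v x) = quad_form P x"
  by (metis riccati_eq_bellman_gain[OF assms(1,2)] assms(3))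

lemma dare_unique:
  fixes A :: "real^'n^'n" and B :: "real^'m^'n"
  assumes R: "sym_posdef R" and Q: "sym_posdef Q"
    and P1: "sym_posdef P1" "P1 = riccati A B Q R P1"
    and P2: "sym_posdef P2" "P2 = riccati A B Q R P2"
  shows "P1 = P2"
proof -
  obtain q where q: "q > 0" "\<And>x. q * (norm x)\<^sup>2 \<le> quad_form Q x"
    using sym_posdef_lower_bound[OF Q] by blast
  have le: "quad_form Pa x \<le> quad_form Pb x"
    if a: "sym_posdef Pa" "Pa = riccati A B Q R Pa"
      and b: "sym_posdef Pb" "Pb = riccati A B Q R Pb" for Pa Pb x
  proof (rule dare_le_bellman_supersolution[OF R q sym_posdef_imp_sym_psd[OF a(1)] a(2)])
    have b_psd: "sym_psd Pb"
      using b(1) by (rule sym_posdef_imp_sym_psd)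
    show "0 \<le> quad_form Pb y" for y
      using b_psd by (simp add: sym_psd_def)
    show "bellman A B Q R Pb y (riccati_gain A B R Pb *v y) \<le> quad_form Pb y" for y
      using dare_closed_loop[OF R b_psd b(2)] by simp
  qed
  have "quad_form P1 x = quad_form P2 x" for x
    using le[OF P1 P2] le[OF P2 P1] by (rule antisym)
  then show ?thesis
    using P1(1) P2(1) sym_matrix_eqI unfolding sym_posdef_def by blast
qed

section \<open>Existence by value iteration\<close>

lemma mat_pow_add: "mat_pow M (m + n) = mat_pow M m ** mat_pow M n"
  by (induction m) (simp_all add: matrix_mul_assoc)

lemma mat_pow_Suc_right: "mat_pow M (Suc n) = mat_pow M n ** M"
  using mat_pow_add[of M n 1] by simp

lemma summable_if_periodic_halving:
  fixes a :: "nat \<Rightarrow> real"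
  assumes N: "0 < N" and nonneg: "\<And>i. 0 \<le> a i" and halving: "\<And>i. a (N + i) \<le> a i / 2"
  shows "summable a"
proof -
  define C where "C = (\<Sum>i<N. a i)"
  have C_nonneg: "0 \<le> C"
    unfolding C_def using nonneg by (intro sum_nonneg) auto
  have "(\<Sum>i<n. a i) \<le> 2 * C" for n
  proof (induction n rule: less_induct)
    case (less n)
    show ?case
    proof (cases "n \<le> N")
      case True
      then have "(\<Sum>i<n. a i) \<le> C"
        unfolding C_def using nonneg by (intro sum_mono2) auto
      then show ?thesis
        using C_nonneg by linarith
    next
      case False
      define m where "m = n - N"
      have n: "n = N + m" and "m < n"
        using False N by (simp_all add: m_def)
      have "(\<Sum>i<N + m. a i) = C + (\<Sum>i<m. a (N + i))"
        unfolding C_def by (induction m) simp_all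
      also have "(\<Sum>i<m. a (N + i)) \<le> (\<Sum>i<m. a i) / 2"
        unfolding sum_divide_distrib by (intro sum_mono halving)
      also have "(\<Sum>i<m. a i) \<le> 2 * C"
        using less.IH \<open>m < n\<close> by blast
      finally show ?thesis
        using C_nonneg n by simp
    qed
  qed
  then show ?thesis
    by (rule summableI_nonneg_bounded[OF nonneg])
qed

lemma schur_stable_summable:
  assumes "schur_stable L"
  shows "summable (\<lambda>i. (norm (mat_pow L i *v x))\<^sup>2)"
proof -
  have "(\<lambda>k. norm (mat_pow L k)) \<longlonglongrightarrow> 0"
    using assms tendsto_norm_zero unfolding schur_stable_def by blast
  then have "eventually (\<lambda>k. norm (mat_pow L k) < 1 / 2) sequentially"
    by (rule order_tendstoD) simp
  then obtain N0 where "\<forall>k\<ge>N0. norm (mat_pow L k) < 1 / 2"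
    unfolding eventually_sequentially by blast
  then have N0: "norm (mat_pow L (Suc N0)) < 1 / 2"
    by (meson le_SucI order_refl)
  show ?thesis
  proof (rule summable_if_periodic_halving[where N = "Suc N0"])
    fix i
    have "norm (mat_pow L (Suc N0 + i) *v x) \<le> norm (mat_pow L (Suc N0)) * norm (mat_pow L i *v x)"
      unfolding mat_pow_add matrix_vector_mul_assoc[symmetric] by (rule norm_matrix_vector_mult_le)
    also have "\<dots> \<le> 1 / 2 * norm (mat_pow L i *v x)"
      using N0 by (intro mult_right_mono) auto
    finally have "(norm (mat_pow L (Suc N0 + i) *v x))\<^sup>2 \<le> (1 / 2 * norm (mat_pow L i *v x))\<^sup>2"
      by (intro power_mono) auto
    then have "(norm (mat_pow L (Suc N0 + i) *v x))\<^sup>2 \<le> (norm (mat_pow L i *v x))\<^sup>2 / 4"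
      by (simp add: power_mult_distrib power_divide del: mat_pow.simps)
    then show "(norm (mat_pow L (Suc N0 + i) *v x))\<^sup>2 \<le> (norm (mat_pow L i *v x))\<^sup>2 / 2"
      using zero_le_power2[of "norm (mat_pow L i *v x)"] by linarith
  qed auto
qed

lemma sym_psd_riccati_iterate:
  assumes "sym_posdef R" "sym_psd Q"
  shows "sym_psd ((riccati A B Q R ^^ k) 0)"
proof (induction k)
  case (Suc k)
  then show ?case
    using sym_psd_riccati[OF assms] by simp
qed (simp add: sym_psd_def)

lemma riccati_iterate_mono:
  assumes R: "sym_posdef R" and Q: "sym_psd Q"
  shows "quad_form ((riccati A B Q R ^^ k) 0) x \<le> quad_form ((riccati A B Q R ^^ Suc k) 0) x"
proof (induction k arbitrary: x)
  case 0
  show ?case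
    using sym_psd_riccati_iterate[OF R Q, where k = 1] by (simp add: sym_psd_def)
next
  case (Suc k)
  show ?case
    using riccati_mono[OF R sym_psd_riccati_iterate[OF R Q] sym_psd_riccati_iterate[OF R Q] Suc.IH]
    by simp
qed

lemma riccati_iterate_le_policy_cost:
  fixes A :: "real^'n^'n" and B :: "real^'m^'n" and K :: "real^'n^'m"
  assumes R: "sym_posdef R" and Q: "sym_psd Q"
  shows "quad_form ((riccati A B Q R ^^ k) 0) x
    \<le> (\<Sum>i<k. quad_form Q (mat_pow (A + B ** K) i *v x) + quad_form R (K *v (mat_pow (A + B ** K) i *v x)))"
proof (induction k arbitrary: x)
  case (Suc k)
  let ?P = "(riccati A B Q R ^^ k) 0" and ?L = "A + B ** K"
  let ?g = "\<lambda>y. quad_form Q y + quad_form R (K *v y)"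
  have "quad_form ((riccati A B Q R ^^ Suc k) 0) x \<le> bellman A B Q R ?P x (K *v x)"
    using riccati_le_bellman[OF R sym_psd_riccati_iterate[OF R Q]] by simp
  also have "\<dots> = ?g x + quad_form ?P (?L *v x)"
    by (simp add: bellman_def matrix_vector_mult_add_rdistrib matrix_vector_mul_assoc)
  also have "\<dots> \<le> ?g x + (\<Sum>i<k. ?g (mat_pow ?L i *v (?L *v x)))"
    using Suc.IH by simp
  also have "\<dots> = (\<Sum>i<Suc k. ?g (mat_pow ?L i *v x))"
    unfolding sum.lessThan_Suc_shift
    by (simp add: mat_pow_Suc_right matrix_vector_mul_assoc del: mat_pow.simps(2))
  finally show ?case .
qed simp

lemma summable_policy_cost:
  fixes A :: "real^'n^'n" and B :: "real^'m^'n" and K :: "real^'n^'m"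
  assumes "schur_stable (A + B ** K)"
  shows "summable (\<lambda>i. quad_form Q (mat_pow (A + B ** K) i *v x) + quad_form R (K *v (mat_pow (A + B ** K) i *v x)))"
proof (rule summable_comparison_test')
  let ?C = "norm Q + norm R * (norm K)\<^sup>2"
  show "summable (\<lambda>i. ?C * (norm (mat_pow (A + B ** K) i *v x))\<^sup>2)"
    using schur_stable_summable[OF assms] by (rule summable_mult)
  fix i
  let ?y = "mat_pow (A + B ** K) i *v x"
  have "\<bar>quad_form R (K *v ?y)\<bar> \<le> norm R * (norm K * norm ?y)\<^sup>2"
    using abs_quad_form_le[of R "K *v ?y"] norm_matrix_vector_mult_le[of K ?y]
    by (meson norm_ge_zero mult_left_mono order_trans power_mono)
  then show "norm (quad_form Q ?y + quad_form R (K *v ?y)) \<le> ?C * (norm ?y)\<^sup>2"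
    using abs_quad_form_le[of Q ?y]
    by (simp add: algebra_simps)
qed

lemma sym_matrix_monotone_convergent:
  fixes M :: "nat \<Rightarrow> real^'n^'n"
  assumes sym: "\<And>k. transpose (M k) = M k"
    and mono: "\<And>k x. quad_form (M k) x \<le> quad_form (M (Suc k)) x"
    and bounded: "\<And>x. bdd_above (range (\<lambda>k. quad_form (M k) x))"
  shows "convergent M"
proof -
  have "convergent (\<lambda>k. quad_form (M k) x)" for x
    using LIMSEQ_incseq_SUP[OF bounded] mono by (auto simp: incseq_SucI convergent_def)
  then have "(\<lambda>k. quad_form (M k) x) \<longlonglongrightarrow> lim (\<lambda>k. quad_form (M k) x)" for x
    by (simp add: convergent_LIMSEQ_iff)
  then have "(\<lambda>k. M k $ i $ j) \<longlonglongrightarrow> (lim (\<lambda>k. quad_form (M k) (axis i 1 + axis j 1))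
      - lim (\<lambda>k. quad_form (M k) (axis i 1)) - lim (\<lambda>k. quad_form (M k) (axis j 1))) / 2" for i j
    unfolding quad_form_polarization[OF sym] by (intro tendsto_intros) simp_all
  then have "M \<longlonglongrightarrow> (\<chi> i j. (lim (\<lambda>k. quad_form (M k) (axis i 1 + axis j 1))
      - lim (\<lambda>k. quad_form (M k) (axis i 1)) - lim (\<lambda>k. quad_form (M k) (axis j 1))) / 2)"
    by (intro vec_tendstoI) simp
  then show ?thesis
    by (rule convergentI)
qed

lemma sym_psd_limit:
  assumes psd: "\<And>k. sym_psd (M k)" and lim: "M \<longlonglongrightarrow> L"
  shows "sym_psd L"
proof -
  have "(\<lambda>k. transpose (M k)) \<longlonglongrightarrow> transpose L"
    unfolding transpose_def by (intro tendsto_vec_lambda tendsto_vec_nth lim)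
  then have "transpose L = L"
    using psd lim LIMSEQ_unique by (simp add: sym_psd_def)
  moreover have "0 \<le> quad_form L x" for x
    using psd by (intro LIMSEQ_le_const[OF tendsto_quad_form[OF lim tendsto_const]])
      (auto simp: sym_psd_def)
  ultimately show ?thesis
    by (simp add: sym_psd_def)
qed

lemma riccati_le_limit_of_iterates:
  fixes A :: "real^'n^'n" and B :: "real^'m^'n"
  assumes R: "sym_posdef R" and Q: "sym_psd Q" and P: "sym_psd P"
    and lim: "(\<lambda>k. (riccati A B Q R ^^ k) 0) \<longlonglongrightarrow> P"
    and below: "\<And>k x. quad_form ((riccati A B Q R ^^ k) 0) x \<le> quad_form P x"
  shows "quad_form (riccati A B Q R P) x \<le> quad_form P x"
proof -
  define Pk where "Pk k = (riccati A B Q R ^^ k) 0" for k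
  define v where "v k = riccati_gain A B R (Pk k) *v x" for k
  obtain r where r: "r > 0" "\<And>v. r * (norm v)\<^sup>2 \<le> quad_form R v"
    using sym_posdef_lower_bound[OF R] by blast
  \<comment> \<open>a bound on the successor state, uniform in k since r |v k|^2 <= Pk (Suc k) x <= P x\<close>
  define Z where "Z = (norm (A *v x) + norm B * sqrt (quad_form P x / r))\<^sup>2"
  have step: "bellman A B Q R (Pk k) x (v k) = quad_form (Pk (Suc k)) x" for k
    using riccati_eq_bellman_gain[OF R sym_psd_riccati_iterate[OF R Q]] by (simp add: Pk_def v_def)
  have bound: "quad_form (riccati A B Q R P) x \<le> quad_form P x + norm (P - Pk k) * Z" for k
  proof -
    have "r * (norm (v k))\<^sup>2 \<le> quad_form P x"
      using step[of k] r(2)[of "v k"] below[of "Suc k" x] Q sym_psd_riccati_iterate[OF R Q, where A = A and B = B and k = k]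
      unfolding bellman_def sym_psd_def Pk_def
      by (smt (verit, best))
    then have "norm (v k) \<le> sqrt (quad_form P x / r)"
      using r(1) by (simp add: field_simps real_le_rsqrt)
    then have "norm (A *v x + B *v v k) \<le> norm (A *v x) + norm B * sqrt (quad_form P x / r)"
      by (meson norm_triangle_le add_left_mono norm_matrix_vector_mult_le mult_left_mono norm_ge_zero
          order_trans)
    then have "(norm (A *v x + B *v v k))\<^sup>2 \<le> Z"
      unfolding Z_def by (intro power_mono) auto
    then have "quad_form (P - Pk k) (A *v x + B *v v k) \<le> norm (P - Pk k) * Z"
      by (meson quad_form_le_norm mult_left_mono norm_ge_zero order_trans)
    moreover have "quad_form (riccati A B Q R P) x \<le> bellman A B Q R P x (v k)"
      by (rule riccati_le_bellman[OF R P])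
    moreover have "bellman A B Q R P x (v k) = quad_form (Pk (Suc k)) x + quad_form (P - Pk k) (A *v x + B *v v k)"
      using step[of k] by (simp add: bellman_def quad_form_matrix_diff)
    ultimately show ?thesis
      using below[of "Suc k" x] unfolding Pk_def by linarith
  qed
  have "(\<lambda>k. quad_form P x + norm (P - Pk k) * Z) \<longlonglongrightarrow> quad_form P x + norm (P - P) * Z"
    unfolding Pk_def by (intro tendsto_intros lim)
  then have "(\<lambda>k. quad_form P x + norm (P - Pk k) * Z) \<longlonglongrightarrow> quad_form P x"
    by simp
  then show ?thesis
    by (rule LIMSEQ_le_const) (use bound in blast)
qed

lemma riccati_fixpoint_of_limit:
  fixes A :: "real^'n^'n" and B :: "real^'m^'n"
  assumes R: "sym_posdef R" and Q: "sym_psd Q"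
    and lim: "(\<lambda>k. (riccati A B Q R ^^ k) 0) \<longlonglongrightarrow> P"
  shows "sym_psd P" and "P = riccati A B Q R P"
proof -
  show P: "sym_psd P"
    using sym_psd_limit[OF sym_psd_riccati_iterate[OF R Q] lim] .
  have below: "quad_form ((riccati A B Q R ^^ k) 0) x \<le> quad_form P x" for k x
  proof (rule incseq_le)
    show "incseq (\<lambda>k. quad_form ((riccati A B Q R ^^ k) 0) x)"
      by (rule incseq_SucI) (rule riccati_iterate_mono[OF R Q])
  qed (rule tendsto_quad_form[OF lim tendsto_const])
  have up: "quad_form P x \<le> quad_form (riccati A B Q R P) x" for x
  proof (rule LIMSEQ_le_const2[OF LIMSEQ_Suc[OF tendsto_quad_form[OF lim tendsto_const]]])
    show "\<exists>N. \<forall>k\<ge>N. quad_form ((riccati A B Q R ^^ Suc k) 0) x \<le> quad_form (riccati A B Q R P) x"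
      using riccati_mono[OF R sym_psd_riccati_iterate[OF R Q] P below] by simp
  qed
  have "quad_form P x = quad_form (riccati A B Q R P) x" for x
    using up riccati_le_limit_of_iterates[OF R Q P lim below] by (intro antisym)
  with P sym_psd_riccati[OF R Q P] show "P = riccati A B Q R P"
    by (simp add: sym_matrix_eqI sym_psd_def)
qed

lemma riccati_iterates_bounded:
  fixes A :: "real^'n^'n" and B :: "real^'m^'n"
  assumes R: "sym_posdef R" and Q: "sym_psd Q" and stab: "stabilizable A B"
  shows "bdd_above (range (\<lambda>k. quad_form ((riccati A B Q R ^^ k) 0) x))"
proof -
  obtain K where K: "schur_stable (A + B ** K)"
    using stab unfolding stabilizable_def by blast
  let ?cost = "\<lambda>i. quad_form Q (mat_pow (A + B ** K) i *v x) + quad_form R (K *v (mat_pow (A + B ** K) i *v x))"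
  have "quad_form ((riccati A B Q R ^^ k) 0) x \<le> suminf ?cost" for k
  proof -
    have "0 \<le> ?cost i" for i
      using Q sym_posdef_imp_sym_psd[OF R] by (simp add: sym_psd_def)
    then have "(\<Sum>i<k. ?cost i) \<le> suminf ?cost"
      by (intro sum_le_suminf summable_policy_cost[OF K]) auto
    then show ?thesis
      using riccati_iterate_le_policy_cost[OF R Q, where A = A and B = B and K = K and k = k and x = x]
      by linarith
  qed
  then show ?thesis
    by (meson bdd_aboveI2)
qed

lemma dare_exists:
  fixes A :: "real^'n^'n" and B :: "real^'m^'n"
  assumes R: "sym_posdef R" and Q: "sym_posdef Q" and stab: "stabilizable A B"
  shows "\<exists>P. sym_posdef P \<and> P = riccati A B Q R P"
proof -
  have Q_psd: "sym_psd Q"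
    using Q by (rule sym_posdef_imp_sym_psd)
  have "convergent (\<lambda>k. (riccati A B Q R ^^ k) 0)"
    using sym_psd_riccati_iterate[OF R Q_psd] riccati_iterate_mono[OF R Q_psd]
      riccati_iterates_bounded[OF R Q_psd stab]
    by (intro sym_matrix_monotone_convergent) (simp_all add: sym_psd_def)
  then obtain P where lim: "(\<lambda>k. (riccati A B Q R ^^ k) 0) \<longlonglongrightarrow> P"
    unfolding convergent_def by blast
  note P = riccati_fixpoint_of_limit[OF R Q_psd lim]
  have "sym_posdef P"
    unfolding sym_posdef_def
  proof (intro conjI allI impI)
    show "transpose P = P"
      using P(1) by (simp add: sym_psd_def)
    fix x :: "real^'n"
    assume "x \<noteq> 0"
    then have "0 < quad_form Q x"
      by (rule sym_posdef_quad_form_pos[OF Q])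
    also have "\<dots> \<le> quad_form P x"
      using quad_form_le_riccati[OF R P(1), where A = A and B = B and Q = Q and x = x] P(2) by simp
    finally show "0 < x \<bullet> (P *v x)"
      by (simp add: quad_form_def)
  qed
  then show ?thesis
    using P(2) by blast
qed

lemma dare_P_solution:
  fixes A :: "real^'n^'n" and B :: "real^'m^'n"
  assumes R: "sym_posdef R" and Q: "sym_posdef Q" and stab: "stabilizable A B"
  shows "sym_posdef (dare_P A B Q R)" and "dare_P A B Q R = riccati A B Q R (dare_P A B Q R)"
proof -
  have "\<exists>!P. sym_posdef P \<and> dare A B Q R P"
    unfolding dare_iff_riccati_fixpoint using dare_exists[OF assms] dare_unique[OF R Q] by blast
  then have "sym_posdef (dare_P A B Q R) \<and> dare A B Q R (dare_P A B Q R)"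
    unfolding dare_P_def by (rule theI')
  then show "sym_posdef (dare_P A B Q R)" and "dare_P A B Q R = riccati A B Q R (dare_P A B Q R)"
    by (simp_all add: dare_iff_riccati_fixpoint)
qed

section \<open>Perturbation of the closed loop\<close>

lemma quad_form_perturbed_decrease:
  assumes P: "sym_psd P" and M: "\<And>z. quad_form P z \<le> M * (norm z)\<^sup>2" and \<eta>: "\<eta> > 0"
    and G: "0 \<le> G" and decrease: "G + quad_form P y = quad_form P x"
  shows "quad_form P (y + w) \<le> quad_form P x - G + \<eta> * M * (norm x)\<^sup>2 + (1 + 1 / \<eta>) * M * (norm w)\<^sup>2"
proof -
  have "\<eta> * quad_form P y \<le> \<eta> * (M * (norm x)\<^sup>2)"
    using decrease G M[of x] \<eta> by (intro mult_left_mono) auto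
  moreover have "(1 + 1 / \<eta>) * quad_form P w \<le> (1 + 1 / \<eta>) * (M * (norm w)\<^sup>2)"
    using M[of w] \<eta> by (intro mult_left_mono) auto
  moreover have "quad_form P (y + w) \<le> (1 + \<eta>) * quad_form P y + (1 + 1 / \<eta>) * quad_form P w"
    by (rule quad_form_young[OF P \<eta>])
  ultimately show ?thesis
    using decrease by (simp add: algebra_simps)
qed

lemma dare_gain_bound:
  assumes R: "sym_posdef R" and r: "\<And>v. r * (norm v)\<^sup>2 \<le> quad_form R v"
    and Q: "sym_psd Q" and P: "sym_psd P" "P = riccati A B Q R P"
  shows "r * (norm (riccati_gain A B R P *v x))\<^sup>2 \<le> quad_form P x"
  using dare_closed_loop[OF R P, of x] r[of "riccati_gain A B R P *v x"] Q P(1)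
  unfolding bellman_def sym_psd_def
  by (smt (verit))

lemma dare_closed_loop_step:
  fixes A :: "real^'n^'n" and B :: "real^'m^'n"
  assumes R: "sym_posdef R" and q: "q > 0" "\<And>x. q * (norm x)\<^sup>2 \<le> quad_form Q x"
    and P: "sym_psd P" "P = riccati A B Q R P" and M: "M > 0" "\<And>x. quad_form P x \<le> M * (norm x)\<^sup>2"
  shows "quad_form P (A *v x + B *v (riccati_gain A B R P *v x) + w)
    \<le> quad_form P x - 3 / 4 * q * (norm x)\<^sup>2 + (1 + 4 * M / q) * M * (norm w)\<^sup>2"
proof -
  define G where "G = quad_form Q x + quad_form R (riccati_gain A B R P *v x)"
  have G: "q * (norm x)\<^sup>2 \<le> G"
    using q(2)[of x] sym_posdef_imp_sym_psd[OF R] by (simp add: G_def sym_psd_def add_increasing2)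
  have "G + quad_form P (A *v x + B *v (riccati_gain A B R P *v x)) = quad_form P x"
    using dare_closed_loop[OF R P] by (simp add: G_def bellman_def)
  then have "quad_form P (A *v x + B *v (riccati_gain A B R P *v x) + w)
      \<le> quad_form P x - G + q / (4 * M) * M * (norm x)\<^sup>2 + (1 + 1 / (q / (4 * M))) * M * (norm w)\<^sup>2"
    using q(1) M(1) order_trans[OF _ G, of 0]
    by (intro quad_form_perturbed_decrease[OF P(1) M(2)]) simp_all
  then show ?thesis
    using G M(1) by (simp add: field_simps)
qed

lemma dare_inflated_closed_loop_step:
  fixes A :: "real^'n^'n" and B :: "real^'m^'n"
  assumes R: "sym_posdef R" and q: "q > 0" "\<And>x. q * (norm x)\<^sup>2 \<le> quad_form Q x"
    and P: "sym_psd P" "P = riccati A B Q R P" and M: "M > 0" "\<And>x. quad_form P x \<le> M * (norm x)\<^sup>2"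
    and s: "0 < s" "s \<le> 1" "s * M \<le> q / 4"
  shows "(1 + s) * quad_form P (A *v x + B *v (riccati_gain A B R P *v x) + w)
    \<le> quad_form P x - q / 2 * (norm x)\<^sup>2 + 2 * ((1 + 4 * M / q) * M) * (norm w)\<^sup>2"
proof -
  define C1 where "C1 = (1 + 4 * M / q) * M"
  have C1: "C1 > 0"
    using q(1) M(1) by (simp add: C1_def add_pos_pos)
  have "(1 + s) * quad_form P (A *v x + B *v (riccati_gain A B R P *v x) + w)
      \<le> (1 + s) * (quad_form P x - 3 / 4 * q * (norm x)\<^sup>2 + C1 * (norm w)\<^sup>2)"
    using dare_closed_loop_step[OF R q P M] s(1) unfolding C1_def by (intro mult_left_mono) auto
  also have "\<dots> = quad_form P x + s * quad_form P x - 3 / 4 * q * (norm x)\<^sup>2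
      - s * (3 / 4 * q * (norm x)\<^sup>2) + C1 * (norm w)\<^sup>2 + s * (C1 * (norm w)\<^sup>2)"
    by (simp add: algebra_simps)
  also have "\<dots> \<le> quad_form P x - q / 2 * (norm x)\<^sup>2 + 2 * C1 * (norm w)\<^sup>2"
  proof -
    have "s * quad_form P x \<le> s * (M * (norm x)\<^sup>2)"
      using M(2)[of x] s(1) by (intro mult_left_mono) auto
    also have "\<dots> \<le> q / 4 * (norm x)\<^sup>2"
      unfolding mult.assoc[symmetric] using s(3) by (rule mult_right_mono) simp
    moreover have "0 \<le> s * (3 / 4 * q * (norm x)\<^sup>2)"
      using s(1) q(1) by simp
    moreover have "s * (C1 * (norm w)\<^sup>2) \<le> 1 * (C1 * (norm w)\<^sup>2)"
      using s(2) C1 by (intro mult_right_mono) auto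
    ultimately show ?thesis
      by linarith
  qed
  finally show ?thesis
    by (simp add: C1_def)
qed

lemma dare_gain_perturbation_bound:
  fixes A A' :: "real^'n^'n" and B B' :: "real^'m^'n"
  assumes R: "sym_posdef R" and r: "r > 0" "\<And>v. r * (norm v)\<^sup>2 \<le> quad_form R v" and Q: "sym_psd Q"
    and P: "sym_psd P" "P = riccati A B Q R P" and M: "\<And>x. quad_form P x \<le> M * (norm x)\<^sup>2"
    and close: "norm (A' - A) \<le> \<delta>" "norm (B' - B) \<le> \<delta>"
  shows "(norm ((A' - A) *v y + (B' - B) *v (riccati_gain A B R P *v y)))\<^sup>2
    \<le> 2 * \<delta>\<^sup>2 * (1 + M / r) * (norm y)\<^sup>2"
proof -
  let ?v = "riccati_gain A B R P *v y"
  have gain: "(norm ?v)\<^sup>2 \<le> M / r * (norm y)\<^sup>2"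
    using dare_gain_bound[OF R r(2) Q P, of y] M[of y] r(1) by (simp add: field_simps)
  have "(norm ((A' - A) *v y + (B' - B) *v ?v))\<^sup>2 \<le> 2 * (\<delta>\<^sup>2 * (norm y)\<^sup>2) + 2 * (\<delta>\<^sup>2 * (norm ?v)\<^sup>2)"
    using norm_add_squared_le[of "(A' - A) *v y" "(B' - B) *v ?v"]
      norm_matrix_vector_mult_squared_le[OF close(1), of y]
      norm_matrix_vector_mult_squared_le[OF close(2), of ?v]
    by linarith
  also have "\<dots> \<le> 2 * (\<delta>\<^sup>2 * (norm y)\<^sup>2) + 2 * (\<delta>\<^sup>2 * (M / r * (norm y)\<^sup>2))"
    using gain by (intro add_left_mono mult_left_mono) simp_all
  finally show ?thesis
    by (simp add: algebra_simps)
qed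

(* Inflating P by 1 + s gains a margin s q |y|^2 in the Bellman inequality, which absorbs the
   error of order delta |y| caused by the perturbation of (A, B). *)
lemma dare_inflated_bellman_inequality:
  fixes A A' :: "real^'n^'n" and B B' :: "real^'m^'n"
  assumes R: "sym_posdef R" and q: "q > 0" "\<And>x. q * (norm x)\<^sup>2 \<le> quad_form Q x"
    and r: "r > 0" "\<And>v. r * (norm v)\<^sup>2 \<le> quad_form R v" and Q: "sym_psd Q"
    and P: "sym_psd P" "P = riccati A B Q R P" and M: "M > 0" "\<And>x. quad_form P x \<le> M * (norm x)\<^sup>2"
    and s: "0 < s" "s \<le> 1"
    and close: "norm (A' - A) \<le> \<delta>" "norm (B' - B) \<le> \<delta>"
    and small: "16 * \<delta>\<^sup>2 * (1 + M / r) * M * (1 + 4 * M / (s * q)) \<le> s * q"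
  shows "bellman A' B' Q R ((1 + s) *\<^sub>R P) y (riccati_gain A B R P *v y) \<le> quad_form ((1 + s) *\<^sub>R P) y"
proof -
  define K where "K = riccati_gain A B R P"
  define \<eta> where "\<eta> = s * q / (4 * M)"
  define G where "G = quad_form Q y + quad_form R (K *v y)"
  define w where "w = (A' - A) *v y + (B' - B) *v (K *v y)"
  define c where "c = s * q * (norm y)\<^sup>2"
  have \<eta>: "\<eta> > 0"
    using s q M by (simp add: \<eta>_def)
  have G: "q * (norm y)\<^sup>2 \<le> G"
    using q(2)[of y] sym_posdef_imp_sym_psd[OF R] by (simp add: G_def sym_psd_def add_increasing2)
  have decrease: "G + quad_form P (A *v y + B *v (K *v y)) = quad_form P y"
    using dare_closed_loop[OF R P] by (simp add: G_def K_def bellman_def)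
  have "(1 + 1 / \<eta>) * M * (norm w)\<^sup>2 \<le> (1 + 1 / \<eta>) * M * (2 * \<delta>\<^sup>2 * (1 + M / r) * (norm y)\<^sup>2)"
    using dare_gain_perturbation_bound[OF R r Q P M(2) close] \<eta> M(1)
    by (intro mult_left_mono) (simp_all add: w_def K_def)
  also have "\<dots> = 1 / 8 * (16 * \<delta>\<^sup>2 * (1 + M / r) * M * (1 + 4 * M / (s * q)) * (norm y)\<^sup>2)"
    by (simp add: \<eta>_def)
  also have "\<dots> \<le> 1 / 8 * c"
    unfolding c_def using small by (intro mult_left_mono mult_right_mono) simp_all
  finally have w: "(1 + 1 / \<eta>) * M * (norm w)\<^sup>2 \<le> 1 / 8 * c" .
  have "A' *v y + B' *v (K *v y) = A *v y + B *v (K *v y) + w"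
    by (simp add: w_def matrix_vector_mult_diff_rdistrib)
  then have "quad_form P (A' *v y + B' *v (K *v y))
      \<le> quad_form P y - G + \<eta> * M * (norm y)\<^sup>2 + (1 + 1 / \<eta>) * M * (norm w)\<^sup>2"
    using G q(1) order_trans[OF _ G, of 0]
    by (simp add: quad_form_perturbed_decrease[OF P(1) M(2) \<eta> _ decrease])
  moreover have "\<eta> * M * (norm y)\<^sup>2 = 1 / 4 * c"
    using M(1) by (simp add: \<eta>_def c_def)
  ultimately have "quad_form P (A' *v y + B' *v (K *v y)) \<le> quad_form P y - G + 3 / 8 * c"
    using w by linarith
  then have "(1 + s) * quad_form P (A' *v y + B' *v (K *v y)) \<le> (1 + s) * (quad_form P y - G + 3 / 8 * c)"
    using s(1) by (intro mult_left_mono) auto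
  also have "\<dots> = (1 + s) * quad_form P y - G - s * G + (1 + s) * (3 / 8 * c)"
    by (simp add: algebra_simps)
  finally have "(1 + s) * quad_form P (A' *v y + B' *v (K *v y))
      \<le> (1 + s) * quad_form P y - G - s * G + (1 + s) * (3 / 8 * c)" .
  moreover have "c \<le> s * G" and "0 \<le> c"
    using G s(1) q(1) by (simp_all add: c_def mult.assoc mult_left_mono)
  moreover have "(1 + s) * (3 / 8 * c) \<le> 2 * (3 / 8 * c)"
    using s \<open>0 \<le> c\<close> by (intro mult_right_mono) auto
  ultimately have "G + (1 + s) * quad_form P (A' *v y + B' *v (K *v y)) \<le> (1 + s) * quad_form P y"
    by linarith
  then show ?thesis
    by (simp add: bellman_def G_def K_def quad_form_matrix_scaleR)
qed

lemma dare_perturbation: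
  fixes A A' :: "real^'n^'n" and B B' :: "real^'m^'n"
  assumes R: "sym_posdef R" and q: "q > 0" "\<And>x. q * (norm x)\<^sup>2 \<le> quad_form Q x"
    and r: "r > 0" "\<And>v. r * (norm v)\<^sup>2 \<le> quad_form R v" and Q: "sym_psd Q"
    and P: "sym_psd P" "P = riccati A B Q R P" and M: "M > 0" "\<And>x. quad_form P x \<le> M * (norm x)\<^sup>2"
    and P': "sym_psd P'" "P' = riccati A' B' Q R P'"
    and s: "0 < s" "s \<le> 1"
    and close: "norm (A' - A) \<le> \<delta>" "norm (B' - B) \<le> \<delta>"
    and small: "16 * \<delta>\<^sup>2 * (1 + M / r) * M * (1 + 4 * M / (s * q)) \<le> s * q"
  shows "quad_form P' x \<le> (1 + s) * quad_form P x"
proof -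
  have "0 \<le> quad_form ((1 + s) *\<^sub>R P) y" for y
    using P(1) s by (simp add: sym_psd_def quad_form_matrix_scaleR)
  then have "quad_form P' x \<le> quad_form ((1 + s) *\<^sub>R P) x"
    using dare_inflated_bellman_inequality[OF R q r Q P M s close small]
    by (rule dare_le_bellman_supersolution[OF R q P'])
  then show ?thesis
    by (simp add: quad_form_matrix_scaleR)
qed

section \<open>Parameter-dependent LQR\<close>

lemma affine_map_lipschitz:
  fixes f :: "'a::euclidean_space \<Rightarrow> 'b::real_normed_vector"
  assumes "affine_map f"
  obtains C where "C \<ge> 0" and "\<And>t t'. norm (f t' - f t) \<le> C * norm (t' - t)"
proof -
  obtain c L where L: "linear L" "\<And>t. f t = c + L t"
    using assms unfolding affine_map_def by blast
  obtain C where C: "C > 0" "\<And>h. norm (L h) \<le> norm h * C"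
    using bounded_linear.pos_bounded[OF linear_conv_bounded_linear[THEN iffD1, OF L(1)]] by blast
  have "norm (f t' - f t) \<le> C * norm (t' - t)" for t t'
    using C(2)[of "t' - t"] L by (simp add: linear_diff mult.commute)
  with C(1) show ?thesis
    by (intro that[of C]) simp_all
qed

lemma compact_uniform_bound:
  fixes S :: "'a::metric_space set"
  assumes "compact S"
    and locally: "\<And>t. t \<in> S \<Longrightarrow> \<exists>d>0. \<exists>b. \<forall>t'\<in>S. dist t' t < d \<longrightarrow> F t' b"
    and mono: "\<And>t b b'. F t b \<Longrightarrow> b \<le> b' \<Longrightarrow> F t b'"
  shows "\<exists>b :: real. \<forall>t\<in>S. F t b"
proof -
  obtain d bnd where d: "\<And>t. t \<in> S \<Longrightarrow> d t > 0 \<and> (\<forall>t'\<in>S. dist t' t < d t \<longrightarrow> F t' (bnd t))"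
    using locally by metis
  have "S \<subseteq> (\<Union>t\<in>S. ball t (d t))"
    using d by force
  then obtain T where T: "T \<subseteq> S" "finite T" "S \<subseteq> (\<Union>t\<in>T. ball t (d t))"
    using compactE_image[OF assms(1), of S "\<lambda>t. ball t (d t)"] by blast
  have "F t (Max (insert 0 (bnd ` T)))" if "t \<in> S" for t
  proof -
    obtain t0 where "t0 \<in> T" "t \<in> ball t0 (d t0)"
      using T(3) \<open>t \<in> S\<close> by blast
    then have "F t (bnd t0)"
      using d[of t0] T(1) \<open>t \<in> S\<close> by (auto simp: dist_commute)
    then show ?thesis
      using T(2) \<open>t0 \<in> T\<close> by (elim mono) simp
  qed
  then show ?thesis
    by blast
qed

locale lqr_family =
  fixes A :: "real^'p \<Rightarrow> real^'n^'n" and B :: "real^'p \<Rightarrow> real^'m^'n"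
    and Q :: "real^'n^'n" and R :: "real^'m^'m" and \<Theta> :: "(real^'p) set"
  assumes affine_A: "affine_map A" and affine_B: "affine_map B"
    and Q_posdef: "sym_posdef Q" and R_posdef: "sym_posdef R"
    and stabilizable_on: "\<And>t. t \<in> \<Theta> \<Longrightarrow> stabilizable (A t) (B t)"
    and compact_params: "compact \<Theta>"
begin

abbreviation P :: "real^'p \<Rightarrow> real^'n^'n" where
  "P t \<equiv> dare_P (A t) (B t) Q R"

lemma sym_psd_P: "t \<in> \<Theta> \<Longrightarrow> sym_psd (P t)"
  using dare_P_solution(1)[OF R_posdef Q_posdef stabilizable_on] by (rule sym_posdef_imp_sym_psd)

lemma P_fixpoint: "t \<in> \<Theta> \<Longrightarrow> P t = riccati (A t) (B t) Q R (P t)"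
  using dare_P_solution(2)[OF R_posdef Q_posdef stabilizable_on] .

lemma P_local_perturbation:
  assumes M: "M > 0" and s: "0 < s" "s \<le> 1"
  obtains d where "d > 0"
    and "\<And>t t' x. t \<in> \<Theta> \<Longrightarrow> t' \<in> \<Theta> \<Longrightarrow> (\<And>z. quad_form (P t) z \<le> M * (norm z)\<^sup>2) \<Longrightarrow>
      norm (t' - t) < d \<Longrightarrow> quad_form (P t') x \<le> (1 + s) * quad_form (P t) x"
proof -
  obtain q where q: "q > 0" "\<And>x. q * (norm x)\<^sup>2 \<le> quad_form Q x"
    using sym_posdef_lower_bound[OF Q_posdef] by blast
  obtain r where r: "r > 0" "\<And>v. r * (norm v)\<^sup>2 \<le> quad_form R v"
    using sym_posdef_lower_bound[OF R_posdef] by blast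
  obtain CA where CA: "CA \<ge> 0" "\<And>t t'. norm (A t' - A t) \<le> CA * norm (t' - t)"
    using affine_map_lipschitz[OF affine_A] by blast
  obtain CB where CB: "CB \<ge> 0" "\<And>t t'. norm (B t' - B t) \<le> CB * norm (t' - t)"
    using affine_map_lipschitz[OF affine_B] by blast
  define \<kappa> where "\<kappa> = 16 * (1 + M / r) * M * (1 + 4 * M / (s * q))"
  have \<kappa>: "\<kappa> > 0"
    using M s q r by (simp add: \<kappa>_def add_pos_pos)
  define \<delta> where "\<delta> = sqrt (s * q / \<kappa>)"
  have "\<delta>\<^sup>2 = s * q / \<kappa>"
    using s q(1) \<kappa> by (simp add: \<delta>_def)
  then have small: "16 * \<delta>\<^sup>2 * (1 + M / r) * M * (1 + 4 * M / (s * q)) \<le> s * q"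
    using \<kappa> s(1) q(1) by (simp add: \<kappa>_def mult_ac)
  show ?thesis
  proof (rule that)
    show "\<delta> / (CA + CB + 1) > 0"
      using s q(1) \<kappa> CA(1) CB(1) by (simp add: \<delta>_def)
    fix t t' x
    assume t: "t \<in> \<Theta>" "t' \<in> \<Theta>" and PM: "\<And>z. quad_form (P t) z \<le> M * (norm z)\<^sup>2"
      and near: "norm (t' - t) < \<delta> / (CA + CB + 1)"
    have near': "(CA + CB + 1) * norm (t' - t) \<le> \<delta>"
      using near CA(1) CB(1) by (simp add: field_simps)
    have "CA * norm (t' - t) \<le> (CA + CB + 1) * norm (t' - t)"
      and "CB * norm (t' - t) \<le> (CA + CB + 1) * norm (t' - t)"
      using CA(1) CB(1) by (simp_all add: mult_right_mono)
    then have "norm (A t' - A t) \<le> \<delta>" and "norm (B t' - B t) \<le> \<delta>"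
      using CA(2)[of t' t] CB(2)[of t' t] near' by linarith+
    then show "quad_form (P t') x \<le> (1 + s) * quad_form (P t) x"
      using dare_perturbation[OF R_posdef q r sym_posdef_imp_sym_psd[OF Q_posdef]
          sym_psd_P[OF t(1)] P_fixpoint[OF t(1)] M PM sym_psd_P[OF t(2)] P_fixpoint[OF t(2)] s]
        small by blast
  qed
qed

lemma P_bounded:
  obtains M where "M > 0" and "\<And>t x. t \<in> \<Theta> \<Longrightarrow> quad_form (P t) x \<le> M * (norm x)\<^sup>2"
proof -
  have locally_bounded: "\<exists>d>0. \<exists>b. \<forall>t\<in>\<Theta>. dist t t0 < d \<longrightarrow> (\<forall>x. quad_form (P t) x \<le> b * (norm x)\<^sup>2)"
    if t0: "t0 \<in> \<Theta>" for t0
  proof -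
    define M0 where "M0 = norm (P t0) + 1"
    have M0: "M0 > 0"
      by (simp add: M0_def add_nonneg_pos)
    have PM0: "quad_form (P t0) z \<le> M0 * (norm z)\<^sup>2" for z
      using quad_form_le_norm[of "P t0" z] zero_le_power2[of "norm z"]
      unfolding M0_def distrib_right mult_1 by linarith
    obtain d where d: "d > 0" and near: "\<And>t x. t \<in> \<Theta> \<Longrightarrow> norm (t - t0) < d \<Longrightarrow>
        quad_form (P t) x \<le> 2 * quad_form (P t0) x"
      using P_local_perturbation[OF M0, of 1] t0 PM0 by (metis one_add_one order_refl zero_less_one)
    have "quad_form (P t) x \<le> 2 * M0 * (norm x)\<^sup>2" if "t \<in> \<Theta>" "dist t t0 < d" for t x
      using near[of t x] PM0[of x] that by (simp add: dist_norm)
    then show ?thesis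
      using d by blast
  qed
  have mono: "\<forall>x. quad_form (P t) x \<le> b' * (norm x)\<^sup>2"
    if "\<forall>x. quad_form (P t) x \<le> b * (norm x)\<^sup>2" "b \<le> b'" for t b b'
    using that by (meson mult_right_mono order_trans zero_le_power2)
  have "\<exists>b. \<forall>t\<in>\<Theta>. \<forall>x. quad_form (P t) x \<le> b * (norm x)\<^sup>2"
    by (rule compact_uniform_bound[OF compact_params]) (fact locally_bounded, fact mono)
  then obtain b where b: "\<And>t. t \<in> \<Theta> \<Longrightarrow> \<forall>x. quad_form (P t) x \<le> b * (norm x)\<^sup>2"
    by blast
  have "quad_form (P t) x \<le> max b 1 * (norm x)\<^sup>2" if "t \<in> \<Theta>" for t x
    using b[OF that] by (meson max.cobounded1 mult_right_mono order_trans zero_le_power2)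
  then show ?thesis
    using that[of "max b 1"] by simp
qed

lemma P_parameter_jump:
  assumes s: "0 < s" "s \<le> 1" and \<mu>: "\<mu> > 0"
  obtains C where "C \<ge> 0"
    and "\<And>t t' z w :: real^'n. t \<in> \<Theta> \<Longrightarrow> t' \<in> \<Theta> \<Longrightarrow> norm (t' - t) \<le> sqrt \<mu> * norm w \<Longrightarrow> norm z \<le> X \<Longrightarrow>
      quad_form (P t') z \<le> (1 + s) * quad_form (P t) z + C * (norm w)\<^sup>2"
proof -
  obtain M where M: "M > 0" "\<And>t x. t \<in> \<Theta> \<Longrightarrow> quad_form (P t) x \<le> M * (norm x)\<^sup>2"
    using P_bounded by blast
  obtain d where d: "d > 0" and near: "\<And>t t' x. t \<in> \<Theta> \<Longrightarrow> t' \<in> \<Theta> \<Longrightarrow> norm (t' - t) < d \<Longrightarrow>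
      quad_form (P t') x \<le> (1 + s) * quad_form (P t) x"
    using P_local_perturbation[OF M(1) s] M(2) by metis
  define C where "C = M * X\<^sup>2 * \<mu> / d\<^sup>2"
  have C: "C \<ge> 0"
    using M(1) \<mu> by (simp add: C_def)
  show ?thesis
  proof (rule that[OF C])
    fix t t' :: "real^'p" and z w :: "real^'n"
    assume t: "t \<in> \<Theta>" "t' \<in> \<Theta>" and jump: "norm (t' - t) \<le> sqrt \<mu> * norm w" and z: "norm z \<le> X"
    have P_nonneg: "0 \<le> quad_form (P t) z"
      using sym_psd_P[OF t(1)] by (simp add: sym_psd_def)
    show "quad_form (P t') z \<le> (1 + s) * quad_form (P t) z + C * (norm w)\<^sup>2"
    \<comment> \<open>a jump of at least d is paid for by the update law, since it forces d <= sqrt mu |w|\<close>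
    proof (cases "norm (t' - t) < d")
      case True
      then show ?thesis
        using near[OF t True, of z] C by (simp add: add_increasing2)
    next
      case False
      then have "d\<^sup>2 \<le> (sqrt \<mu> * norm w)\<^sup>2"
        using jump d by (intro power_mono) auto
      then have "d\<^sup>2 \<le> \<mu> * (norm w)\<^sup>2"
        using \<mu> by (simp add: power_mult_distrib)
      then have "X\<^sup>2 * d\<^sup>2 \<le> X\<^sup>2 * (\<mu> * (norm w)\<^sup>2)"
        by (intro mult_left_mono) simp_all
      then have "M * X\<^sup>2 \<le> C * (norm w)\<^sup>2"
        using M(1) d by (simp add: C_def field_simps)
      moreover have "(norm z)\<^sup>2 \<le> X\<^sup>2"
        using z by (intro power_mono) auto
      then have "quad_form (P t') z \<le> M * X\<^sup>2"
        using M(2)[OF t(2), of z] M(1) by (meson mult_left_mono order_trans less_imp_le)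
      moreover have "0 \<le> (1 + s) * quad_form (P t) z"
        using P_nonneg s by simp
      ultimately show ?thesis
        by linarith
    qed
  qed
qed

lemma certainty_equivalent_decrease:
  assumes \<mu>: "\<mu> > 0"
  obtains \<alpha> \<beta> where "\<alpha> > 0" and "\<beta> > 0"
    and "\<And>t t' x w :: real^'n. t \<in> \<Theta> \<Longrightarrow> t' \<in> \<Theta> \<Longrightarrow> norm (t' - t) \<le> sqrt \<mu> * norm w \<Longrightarrow>
      norm (A t *v x + B t *v (K_LQR (A t) (B t) Q R *v x) + w) \<le> X \<Longrightarrow>
      quad_form (P t') (A t *v x + B t *v (K_LQR (A t) (B t) Q R *v x) + w) - quad_form (P t) x
        \<le> - \<alpha> * (norm x)\<^sup>2 + \<beta> * (norm w)\<^sup>2"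
proof -
  obtain q where q: "q > 0" "\<And>x. q * (norm x)\<^sup>2 \<le> quad_form Q x"
    using sym_posdef_lower_bound[OF Q_posdef] by blast
  obtain M where M: "M > 0" "\<And>t x. t \<in> \<Theta> \<Longrightarrow> quad_form (P t) x \<le> M * (norm x)\<^sup>2"
    using P_bounded by blast
  define s where "s = min 1 (q / (4 * M))"
  have s: "0 < s" "s \<le> 1" "s * M \<le> q / 4"
    using q(1) M(1) by (auto simp: s_def min_def field_simps)
  obtain C where C: "C \<ge> 0" and jump: "\<And>t t' z w :: real^'n. t \<in> \<Theta> \<Longrightarrow> t' \<in> \<Theta> \<Longrightarrow>
      norm (t' - t) \<le> sqrt \<mu> * norm w \<Longrightarrow> norm z \<le> X \<Longrightarrow>
      quad_form (P t') z \<le> (1 + s) * quad_form (P t) z + C * (norm w)\<^sup>2"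
    using P_parameter_jump[OF s(1,2) \<mu>] by blast
  define C1 where "C1 = (1 + 4 * M / q) * M"
  have C1: "C1 > 0"
    using q(1) M(1) by (simp add: C1_def add_pos_pos)
  show ?thesis
  proof (rule that[of "q / 2" "2 * C1 + C"])
    fix t t' :: "real^'p" and x w :: "real^'n"
    assume t: "t \<in> \<Theta>" "t' \<in> \<Theta>" and near: "norm (t' - t) \<le> sqrt \<mu> * norm w"
      and bounded: "norm (A t *v x + B t *v (K_LQR (A t) (B t) Q R *v x) + w) \<le> X"
    have "quad_form (P t') (A t *v x + B t *v (K_LQR (A t) (B t) Q R *v x) + w)
        \<le> (1 + s) * quad_form (P t) (A t *v x + B t *v (K_LQR (A t) (B t) Q R *v x) + w) + C * (norm w)\<^sup>2"
      by (rule jump[OF t near bounded])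
    also have "\<dots> \<le> quad_form (P t) x - q / 2 * (norm x)\<^sup>2 + 2 * C1 * (norm w)\<^sup>2 + C * (norm w)\<^sup>2"
      using dare_inflated_closed_loop_step[OF R_posdef q sym_psd_P[OF t(1)] P_fixpoint[OF t(1)] M(1)
          M(2)[OF t(1)] s]
      by (simp add: K_LQR_eq_riccati_gain C1_def)
    finally show "quad_form (P t') (A t *v x + B t *v (K_LQR (A t) (B t) Q R *v x) + w) - quad_form (P t) x
        \<le> - (q / 2) * (norm x)\<^sup>2 + (2 * C1 + C) * (norm w)\<^sup>2"
      by (simp add: algebra_simps)
  qed (use q(1) C1 C in auto)
qed

end

theorem proposition2:
  fixes A :: "real^'p \<Rightarrow> real^'n^'n" and B :: "real^'p \<Rightarrow> real^'m^'n"
    and Q :: "real^'n^'n" and R :: "real^'m^'m"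
    and x :: "nat \<Rightarrow> real^'n" and u :: "nat \<Rightarrow> real^'m" and w :: "nat \<Rightarrow> real^'n"
    and \<theta> :: "nat \<Rightarrow> real^'p" and \<theta>h :: "nat \<Rightarrow> real^'p"
    and e :: "nat \<Rightarrow> real^'n"
    and \<Theta> :: "(real^'p) set" and Wbar \<mu> X :: real
  assumes affA: "affine_map A" and affB: "affine_map B"
    and Qpd: "sym_posdef Q" and Rpd: "sym_posdef R"
    and dyn: "\<And>k. x (Suc k) = A (\<theta> k) *v x k + B (\<theta> k) *v u k + w k"
    and Wbar: "Wbar \<ge> 0" "\<And>k. norm (w k) \<le> Wbar"
    and Theta: "compact \<Theta>" "convex \<Theta>" "\<And>k. \<theta> k \<in> \<Theta>"
    and stab: "\<And>th. th \<in> \<Theta> \<Longrightarrow> stabilizable (A th) (B th)"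
    and mu: "\<mu> > 0"
    and est: "\<And>k. \<theta>h k \<in> \<Theta>"
    and input: "\<And>k. u k = K_LQR (A (\<theta>h k)) (B (\<theta>h k)) Q R *v x k"
    and err: "\<And>k. e k = x (Suc k) - (A (\<theta>h k) *v x k + B (\<theta>h k) *v u k) - w k"
    and upd: "\<And>k. norm (\<theta>h (Suc k) - \<theta>h k) \<le> sqrt \<mu> * norm (e k + w k)"
    and Xpos: "X > 0" and xbd: "\<And>k. norm (x k) \<le> X"
  shows "\<exists>\<alpha> \<beta> \<gamma>. \<alpha> > 0 \<and> \<beta> > 0 \<and> \<gamma> > 0 \<and>
    (\<forall>k. let V = (\<lambda>z th. z \<bullet> (dare_P (A th) (B th) Q R *v z)) in
       V (x (Suc k)) (\<theta>h (Suc k)) - V (x k) (\<theta>h k)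
         \<le> - \<alpha> * (norm (x k))\<^sup>2 + \<beta> * (norm (e k))\<^sup>2 + \<gamma> * (norm (w k))\<^sup>2)"
proof -
  interpret lqr_family A B Q R \<Theta>
    using affA affB Qpd Rpd stab Theta(1) by unfold_locales
  obtain \<alpha> \<beta> where \<alpha>: "\<alpha> > 0" and \<beta>: "\<beta> > 0" and decrease: "\<And>t t' x w :: real^'n.
      t \<in> \<Theta> \<Longrightarrow> t' \<in> \<Theta> \<Longrightarrow> norm (t' - t) \<le> sqrt \<mu> * norm w \<Longrightarrow>
      norm (A t *v x + B t *v (K_LQR (A t) (B t) Q R *v x) + w) \<le> X \<Longrightarrow>
      quad_form (P t') (A t *v x + B t *v (K_LQR (A t) (B t) Q R *v x) + w) - quad_form (P t) x
        \<le> - \<alpha> * (norm x)\<^sup>2 + \<beta> * (norm w)\<^sup>2"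
    using certainty_equivalent_decrease[OF mu] by blast
  have "quad_form (P (\<theta>h (Suc k))) (x (Suc k)) - quad_form (P (\<theta>h k)) (x k)
      \<le> - \<alpha> * (norm (x k))\<^sup>2 + (2 * \<beta>) * (norm (e k))\<^sup>2 + (2 * \<beta>) * (norm (w k))\<^sup>2" for k
  proof -
    have closed_loop: "x (Suc k) = A (\<theta>h k) *v x k + B (\<theta>h k) *v (K_LQR (A (\<theta>h k)) (B (\<theta>h k)) Q R *v x k)
        + (e k + w k)"
      using err[of k] input[of k] by simp
    have "quad_form (P (\<theta>h (Suc k))) (x (Suc k)) - quad_form (P (\<theta>h k)) (x k)
        \<le> - \<alpha> * (norm (x k))\<^sup>2 + \<beta> * (norm (e k + w k))\<^sup>2"
      unfolding closed_loop by (rule decrease[OF est est upd xbd[of "Suc k", unfolded closed_loop]])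
    also have "\<beta> * (norm (e k + w k))\<^sup>2 \<le> \<beta> * (2 * (norm (e k))\<^sup>2 + 2 * (norm (w k))\<^sup>2)"
      using \<beta> norm_add_squared_le by (intro mult_left_mono) auto
    finally show ?thesis
      by (simp add: algebra_simps)
  qed
  then show ?thesis
    using \<alpha> \<beta> unfolding Let_def quad_form_def by (intro exI[of _ \<alpha>] exI[of _ "2 * \<beta>"]) auto
qed

end
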